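(* Let $\mathcal{M}$ be a monotone model of dimension $n$, $\mathbf{x}\in\{0,1\}^n$ an instance and $\delta\in(0,1]$. If $\mathbf{y}\subseteq\mathbf{x}$ is a $\delta$-sufficient reason for $\mathbf{x}$ under $\mathcal{M}$ that is not minimal, then there is $i\in\{1,\dots,n\}$ with $\mathbf{y}[i]\neq\bot$ such that the partial instance $\mathbf{y}\setminus\{i\}$ (equal to $\mathbf{y}$ except that its $i$-th component is $\bot$) is also a $\delta$-sufficient reason for $\mathbf{x}$ under $\mathcal{M}$.
   Context: A model of dimension $n$ is a Boolean function $\mathcal{M}:\{0,1\}^n\to\{0,1\}$; it is monotone if $\mathbf{x}[i]\le\mathbf{z}[i]$ for all $i$ implies $\mathcal{M}(\mathbf{x})\le\mathcal{M}(\mathbf{z})$. Partial instances are $\mathbf{y}\in\{0,1,\bot\}^n$; $\mathbf{y}\subseteq\mathbf{x}$ iff $\mathbf{y}[i]=\mathbf{x}[i]$ whenever $\mathbf{y}[i]\ne\bot$; $\mathrm{Comp}(\mathbf{y})=\{\mathbf{z}\in\{0,1\}^n:\mathbf{y}\subseteq\mathbf{z}\}$; $|\mathbf{y}|_\bot$ is the number of $\bot$ entries. A $\delta$-sufficient reason for $\mathbf{x}$ under $\mathcal{M}$ is $\mathbf{y}\subseteq\mathbf{x}$ with $|\{\mathbf{z}\in\mathrm{Comp}(\mathbf{y}):\mathcal{M}(\mathbf{z})=\mathcal{M}(\mathbf{x})\}|\ge\delta2^{|\mathbf{y}|_\bot}$; it is minimal if there is no $\delta$-sufficient reason $\mathbf{y}'$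 for $\mathbf{x}$ under $\mathcal{M}$ with $\mathbf{y}'\subseteq\mathbf{y}$, $\mathbf{y}'\neq\mathbf{y}$. *)

theory Defs
  imports Complex_Main
begin

text \<open>Features are indexed by 0..n-1 (the paper's 1..n). A (total) instance of
dimension n is a function nat => bool vanishing (False) outside {0..<n};
a partial instance is a function nat => bool option with None playing the role
of bottom, equal to None outside {0..<n}.\<close>

definition inst :: "nat \<Rightarrow> (nat \<Rightarrow> bool) set" where
  "inst n = {x. \<forall>i\<ge>n. \<not> x i}"

definition partial :: "nat \<Rightarrow> (nat \<Rightarrow> bool option) set" where
  "partial n = {y. \<forall>i\<ge>n. y i = None}"

definition subsumes :: "(nat \<Rightarrow> bool option) \<Rightarrow> (nat \<Rightarrow> bool) \<Rightarrow> bool" where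
  "subsumes y x \<longleftrightarrow> (\<forall>i. y i \<noteq> None \<longrightarrow> y i = Some (x i))"

definition psubsumes :: "(nat \<Rightarrow> bool option) \<Rightarrow> (nat \<Rightarrow> bool option) \<Rightarrow> bool" where
  "psubsumes y' y \<longleftrightarrow> (\<forall>i. y' i \<noteq> None \<longrightarrow> y' i = y i)"

definition Comp :: "nat \<Rightarrow> (nat \<Rightarrow> bool option) \<Rightarrow> (nat \<Rightarrow> bool) set" where
  "Comp n y = {z \<in> inst n. subsumes y z}"

definition bot_count :: "nat \<Rightarrow> (nat \<Rightarrow> bool option) \<Rightarrow> nat" where
  "bot_count n y = card {i. i < n \<and> y i = None}"

definition monotone_model :: "nat \<Rightarrow> ((nat \<Rightarrow> bool) \<Rightarrow> bool) \<Rightarrow> bool" where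
  "monotone_model n M \<longleftrightarrow>
     (\<forall>x \<in> inst n. \<forall>z \<in> inst n. (\<forall>i<n. x i \<le> z i) \<longrightarrow> M x \<le> M z)"

definition delta_suff ::
  "nat \<Rightarrow> ((nat \<Rightarrow> bool) \<Rightarrow> bool) \<Rightarrow> real \<Rightarrow> (nat \<Rightarrow> bool) \<Rightarrow> (nat \<Rightarrow> bool option) \<Rightarrow> bool" where
  "delta_suff n M \<delta> x y \<longleftrightarrow>
     y \<in> partial n \<and> subsumes y x \<and>
     real (card {z \<in> Comp n y. M z = M x}) \<ge> \<delta> * 2 ^ bot_count n y"

definition minimal_delta_suff ::
  "nat \<Rightarrow> ((nat \<Rightarrow> bool) \<Rightarrow> bool) \<Rightarrow> real \<Rightarrow> (nat \<Rightarrow> bool) \<Rightarrow> (nat \<Rightarrow> bool option) \<Rightarrow> bool" where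
  "minimal_delta_suff n M \<delta> x y \<longleftrightarrow>
     delta_suff n M \<delta> x y \<and>
     \<not> (\<exists>y' \<in> partial n. psubsumes y' y \<and> y' \<noteq> y \<and> delta_suff n M \<delta> x y')"

end

theory Submission
  imports Defs
begin

text \<open>Let \<open>y'\<close> be a strictly smaller \<open>\<delta>\<close>-sufficient reason and \<open>v = M(x)\<close>.
In a monotone model, moving coordinates of a completion towards the output value \<open>v\<close> keeps
the output equal to \<open>v\<close>. If some feature \<open>i\<close> freed by \<open>y'\<close> has \<open>x[i] \<noteq> v\<close>, flipping \<open>i\<close> to \<open>v\<close>
maps the \<open>v\<close>-completions of \<open>y\<close> injectively to new ones of \<open>y \ {i}\<close>, so freeing \<open>i\<close> doubles
their number while doubling \<open>2^{|y|_\<bottom>}\<close>. Otherwise every freed feature has value \<open>v\<close>; for any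
freed \<open>i\<close>, resetting the freed features to \<open>v\<close> maps the \<open>v\<close>-completions of \<open>y'\<close> to those of
\<open>y \ {i}\<close> at most \<open>2^k\<close>-to-one, where \<open>k\<close> is the number of extra \<open>\<bottom>\<close>'s of \<open>y'\<close> over \<open>y \ {i}\<close>.\<close>

abbreviation agreeing_completions ::
  "nat \<Rightarrow> ((nat \<Rightarrow> bool) \<Rightarrow> bool) \<Rightarrow> (nat \<Rightarrow> bool option) \<Rightarrow> bool \<Rightarrow> (nat \<Rightarrow> bool) set" where
  "agreeing_completions n M y v \<equiv> {z \<in> Comp n y. M z = v}"

definition freed_coords :: "(nat \<Rightarrow> bool option) \<Rightarrow> (nat \<Rightarrow> bool option) \<Rightarrow> nat set" where
  "freed_coords y y' = {j. y j \<noteq> None \<and> y' j = None}"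

lemma finite_inst: "finite (inst n)"
proof (rule finite_subset)
  show "inst n \<subseteq> (\<lambda>A j. j \<in> A) ` Pow {0..<n}"
  proof
    fix z assume "z \<in> inst n"
    then have "z = (\<lambda>j. j \<in> {j \<in> {0..<n}. z j})"
      by (auto simp: inst_def fun_eq_iff) (meson not_less)
    then show "z \<in> (\<lambda>A j. j \<in> A) ` Pow {0..<n}" by blast
  qed
qed simp

lemma finite_agreeing_completions: "finite (agreeing_completions n M y v)"
  by (rule finite_subset[OF _ finite_inst]) (auto simp: Comp_def)

lemma partial_defined_lt: "y \<in> partial n \<Longrightarrow> y j \<noteq> None \<Longrightarrow> j < n"
  unfolding partial_def by (auto simp flip: not_less)

lemma monotone_model_moved_towards_value:
  assumes mono: "monotone_model n M" and z: "z \<in> inst n" "z' \<in> inst n"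
    and moved: "\<And>j. j < n \<Longrightarrow> z' j \<noteq> z j \<Longrightarrow> z' j = M z"
  shows "M z' = M z"
proof (cases "M z")
  case True
  then have "\<forall>j<n. z j \<le> z' j" using moved by (auto simp: le_bool_def)
  then have "M z \<le> M z'" using mono z unfolding monotone_model_def by blast
  then show ?thesis using True by (simp add: le_bool_def)
next
  case False
  then have "\<forall>j<n. z' j \<le> z j" using moved by (auto simp: le_bool_def)
  then have "M z' \<le> M z" using mono z unfolding monotone_model_def by blast
  then show ?thesis using False by (simp add: le_bool_def)
qed

lemma bot_count_fun_upd_None:
  assumes "i < n" "y i \<noteq> None"
  shows "bot_count n (y(i := None)) = Suc (bot_count n y)"
proof -
  have "{j. j < n \<and> (y(i := None)) j = None} = insert i {j. j < n \<and> y j = None}"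
    using assms(1) by auto
  then show ?thesis using assms(2) by (simp add: bot_count_def)
qed

lemma bot_count_psubsumes:
  assumes "y \<in> partial n" "psubsumes y' y"
  shows "bot_count n y' = bot_count n y + card (freed_coords y y')"
proof -
  have "{j. j < n \<and> y' j = None} = {j. j < n \<and> y j = None} \<union> freed_coords y y'"
    using assms by (auto simp: freed_coords_def psubsumes_def partial_defined_lt)
  moreover have "freed_coords y y' \<subseteq> {0..<n}"
    using assms(1) by (auto simp: freed_coords_def partial_defined_lt)
  then have "finite (freed_coords y y')" by (rule finite_subset) simp
  moreover have "{j. j < n \<and> y j = None} \<inter> freed_coords y y' = {}"
    by (auto simp: freed_coords_def)
  ultimately show ?thesis
    unfolding bot_count_def by (simp add: card_Un_disjoint)
qed

text \<open>Each \<open>v\<close>-completion \<open>z\<close> of \<open>y\<close> yields a second one, \<open>z(i := v)\<close>, of \<open>y(i := None)\<close>.\<close>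

lemma card_agreeing_completions_fun_upd_None:
  assumes mono: "monotone_model n M" and i: "i < n" "y i = Some b" "b \<noteq> v"
  shows "2 * card (agreeing_completions n M y v)
           \<le> card (agreeing_completions n M (y(i := None)) v)"
proof -
  let ?G = "agreeing_completions n M y v"
  let ?flip = "\<lambda>z. z(i := v)"
  have sub: "?G \<union> ?flip ` ?G \<subseteq> agreeing_completions n M (y(i := None)) v"
  proof -
    have "M (?flip z) = v" if "z \<in> ?G" for z
    proof -
      have z: "z \<in> inst n" "M z = v" using that by (auto simp: Comp_def)
      moreover have "?flip z \<in> inst n" using z(1) i(1) by (auto simp: inst_def)
      moreover have "?flip z j = M z" if "?flip z j \<noteq> z j" for j
        using that z(2) by (cases "j = i") auto
      ultimately show ?thesis using monotone_model_moved_towards_value[OF mono] by metis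
    qed
    then show ?thesis using i by (auto simp: Comp_def subsumes_def inst_def)
  qed
  have disj: "?G \<inter> ?flip ` ?G = {}"
    using i by (auto simp: Comp_def subsumes_def)
  have inj: "inj_on ?flip ?G"
  proof (rule inj_onI)
    fix z z' assume "z \<in> ?G" "z' \<in> ?G" and flip: "?flip z = ?flip z'"
    then have "z i = b" "z' i = b" using i(2) by (auto simp: Comp_def subsumes_def)
    show "z = z'"
    proof
      fix j show "z j = z' j"
        using fun_cong[OF flip, of j] \<open>z i = b\<close> \<open>z' i = b\<close> by (cases "j = i") auto
    qed
  qed
  have "card (?G \<union> ?flip ` ?G) = 2 * card ?G"
    using disj inj by (simp add: card_Un_disjoint card_image finite_agreeing_completions)
  then show ?thesis using card_mono[OF finite_agreeing_completions sub] by simp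
qed

text \<open>Resetting the freed features to \<open>v\<close> is at most \<open>2^k\<close>-to-one, because \<open>z\<close> is recovered from
its image together with the set of freed features where \<open>z\<close> is true.\<close>

lemma card_agreeing_completions_psubsumes:
  assumes mono: "monotone_model n M" and y: "y \<in> partial n" and y': "psubsumes y' y"
    and freed: "\<And>j. j \<in> freed_coords y y' \<Longrightarrow> y j = Some v"
  shows "card (agreeing_completions n M y' v)
           \<le> 2 ^ card (freed_coords y y') * card (agreeing_completions n M y v)"
proof -
  define S where "S = freed_coords y y'"
  let ?G = "agreeing_completions n M y' v"
  let ?H = "agreeing_completions n M y v"
  let ?reset = "\<lambda>z j. if j \<in> S then v else z j"
  have S_lt: "j \<in> S \<Longrightarrow> j < n" for j
    using y by (auto simp: S_def freed_coords_def partial_defined_lt)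
  have reset: "?reset z \<in> ?H" if z: "z \<in> ?G" for z
  proof -
    have z_inst: "z \<in> inst n" and z_val: "M z = v" using z by (auto simp: Comp_def)
    have reset_inst: "?reset z \<in> inst n"
      using z_inst by (auto simp: inst_def dest: S_lt)
    moreover have "subsumes y (?reset z)"
      using z freed y' by (auto simp: S_def Comp_def subsumes_def psubsumes_def freed_coords_def)
    moreover have "?reset z j = M z" if "?reset z j \<noteq> z j" for j
      using that z_val by (cases "j \<in> S") auto
    then have "M (?reset z) = v"
      using monotone_model_moved_towards_value[OF mono z_inst reset_inst] z_val by metis
    ultimately show ?thesis by (simp add: Comp_def)
  qed
  have "(\<lambda>z. (?reset z, {j \<in> S. z j})) ` ?G \<subseteq> ?H \<times> Pow S"
    using reset by blast
  moreover have "inj_on (\<lambda>z. (?reset z, {j \<in> S. z j})) ?G"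
    by (rule inj_onI) (auto simp: fun_eq_iff split: if_splits)
  moreover have "finite S" using S_lt by (meson finite_nat_set_iff_bounded)
  ultimately have "card ?G \<le> card (?H \<times> Pow S)"
    by (intro card_inj_on_le) (auto intro: finite_agreeing_completions)
  then show ?thesis
    using \<open>finite S\<close> by (simp add: card_cartesian_product card_Pow S_def mult.commute)
qed

lemma delta_suff_transfer:
  assumes "delta_suff n M \<delta> x u" "v \<in> partial n" "subsumes v x"
    and card: "2 ^ a * card (agreeing_completions n M u (M x))
                 \<le> 2 ^ b * card (agreeing_completions n M v (M x))"
    and bot: "bot_count n u + a = bot_count n v + b"
  shows "delta_suff n M \<delta> x v"
proof -
  have "2 ^ b * (\<delta> * 2 ^ bot_count n v) = \<delta> * 2 ^ (bot_count n v + b)"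
    by (simp add: power_add)
  also have "\<dots> = 2 ^ a * (\<delta> * 2 ^ bot_count n u)"
    by (simp add: bot[symmetric] power_add)
  also have "\<dots> \<le> 2 ^ a * real (card (agreeing_completions n M u (M x)))"
    using assms(1) by (simp add: delta_suff_def)
  also have "\<dots> \<le> 2 ^ b * real (card (agreeing_completions n M v (M x)))"
    using of_nat_mono[OF card] by simp
  finally show ?thesis
    using assms(2,3) by (simp add: delta_suff_def)
qed

lemma delta_suff_fun_upd_None:
  assumes "delta_suff n M \<delta> x y"
  shows "y(i := None) \<in> partial n" "subsumes (y(i := None)) x"
  using assms by (auto simp: delta_suff_def partial_def subsumes_def)

lemma delta_suff_free_coord_off_value:
  assumes mono: "monotone_model n M" and y: "delta_suff n M \<delta> x y"
    and i: "i < n" "y i = Some b" "b \<noteq> M x"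
  shows "delta_suff n M \<delta> x (y(i := None))"
  using card_agreeing_completions_fun_upd_None[OF mono i(1), where y = y, OF i(2,3)]
    bot_count_fun_upd_None[OF i(1)] i(2)
  by (intro delta_suff_transfer[OF y delta_suff_fun_upd_None[OF y], where a = 1 and b = 0]) auto

lemma delta_suff_free_coord_of_psubsumes:
  assumes mono: "monotone_model n M" and y: "delta_suff n M \<delta> x y"
    and y': "delta_suff n M \<delta> x y'" "psubsumes y' y"
    and freed: "\<And>j. j \<in> freed_coords y y' \<Longrightarrow> y j = Some (M x)"
    and i: "i \<in> freed_coords y y'"
  shows "delta_suff n M \<delta> x (y(i := None))"
proof -
  let ?y\<^sub>i = "y(i := None)"
  note y\<^sub>i = delta_suff_fun_upd_None[OF y, of i]
  have ps: "psubsumes y' ?y\<^sub>i" using y'(2) i by (auto simp: psubsumes_def freed_coords_def)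
  have "?y\<^sub>i j = Some (M x)" if "j \<in> freed_coords ?y\<^sub>i y'" for j
  proof -
    have "j \<noteq> i" "j \<in> freed_coords y y'"
      using that by (auto simp: freed_coords_def split: if_splits)
    then show ?thesis using freed by simp
  qed
  then have "card (agreeing_completions n M y' (M x))
      \<le> 2 ^ card (freed_coords ?y\<^sub>i y') * card (agreeing_completions n M ?y\<^sub>i (M x))"
    by (rule card_agreeing_completions_psubsumes[OF mono y\<^sub>i(1) ps])
  then show ?thesis
    using bot_count_psubsumes[OF y\<^sub>i(1) ps]
    by (intro delta_suff_transfer[OF y'(1) y\<^sub>i, where a = 0]) simp_all
qed

theorem lemma1:
  fixes n :: nat and M :: "(nat \<Rightarrow> bool) \<Rightarrow> bool" and x :: "nat \<Rightarrow> bool"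
    and y :: "nat \<Rightarrow> bool option" and \<delta> :: real
  assumes "monotone_model n M"
    and "x \<in> inst n"
    and "0 < \<delta>" and "\<delta> \<le> 1"
    and "delta_suff n M \<delta> x y"
    and "\<not> minimal_delta_suff n M \<delta> x y"
  shows "\<exists>i<n. y i \<noteq> None \<and> delta_suff n M \<delta> x (y(i := None))"
proof -
  obtain y' where y': "delta_suff n M \<delta> x y'" "psubsumes y' y" "y' \<noteq> y"
    using assms(5,6) by (auto simp: minimal_delta_suff_def)
  have y_partial: "y \<in> partial n" using assms(5) by (simp add: delta_suff_def)
  show ?thesis
  proof (cases "\<forall>j \<in> freed_coords y y'. y j = Some (M x)")
    case False
    then obtain j b where "j \<in> freed_coords y y'" "y j = Some b" "b \<noteq> M x"
      by (auto simp: freed_coords_def)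
    then show ?thesis
      using delta_suff_free_coord_off_value[OF assms(1,5)] partial_defined_lt[OF y_partial] by blast
  next
    case True
    obtain i where "y' i \<noteq> y i" using y'(3) by (meson ext)
    moreover from this have "y' i = None" using y'(2) by (auto simp: psubsumes_def)
    ultimately have "y i \<noteq> None" "y' i = None" by simp_all
    then have "i \<in> freed_coords y y'" unfolding freed_coords_def by blast
    then show ?thesis
      using delta_suff_free_coord_of_psubsumes[OF assms(1,5) y'(1,2) True[rule_format]]
        partial_defined_lt[OF y_partial] by (auto simp: freed_coords_def)
  qed
qed

end
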